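(* Let $\sigma\subset\mathbb{R}^m$ be an $m$-simplex and $F\colon\sigma\to\mathbb{R}^m$ a $\xi$-distortion map that fixes each vertex of $\sigma$, with $\xi\le1$. Then for every $x\in\sigma$, $$\|x-F(x)\|\le\frac{3\xi L}{t},$$ where $L=L(\sigma)$ and $t=t(\sigma)$.
   Context: $F$ is a $\xi$-distortion map if $\bigl|\|F(x)-F(y)\|-\|x-y\|\bigr|\le\xi\|x-y\|$ for all $x,y$ in the domain. For an $m$-simplex $\sigma$ ($m\ge1$), $L(\sigma)$ is the length of its longest edge, $a(\sigma)$ is its smallest altitude (distance from a vertex to the affine hull of the opposite facet), and its thickness is $t(\sigma)=a(\sigma)/(mL(\sigma))$. *)

theory Defs
  imports "HOL-Analysis.Analysis"
begin

text \<open>A simplex is given by its finite vertex set V (affinely independent);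
the simplex itself is convex hull V, of dimension card V - 1.\<close>

definition distortion_map :: "real \<Rightarrow> 'a::real_normed_vector set \<Rightarrow> ('a \<Rightarrow> 'b::real_normed_vector) \<Rightarrow> bool" where
  "distortion_map \<xi> S F \<longleftrightarrow>
     (\<forall>x\<in>S. \<forall>y\<in>S. \<bar>norm (F x - F y) - norm (x - y)\<bar> \<le> \<xi> * norm (x - y))"

definition simplex_longest_edge :: "'a::real_normed_vector set \<Rightarrow> real" where
  "simplex_longest_edge V = Max {dist u v | u v. u \<in> V \<and> v \<in> V}"

definition simplex_min_altitude :: "'a::real_normed_vector set \<Rightarrow> real" where
  "simplex_min_altitude V = Min ((\<lambda>v. infdist v (affine hull (V - {v}))) ` V)"

definition simplex_thickness :: "'a::real_normed_vector set \<Rightarrow> real" where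
  "simplex_thickness V =
     simplex_min_altitude V / (real (card V - 1) * simplex_longest_edge V)"

end

theory Submission
  imports Defs
begin

text \<open>Write \<open>w = F x - x\<close>. Since \<open>F\<close> fixes the vertices, the distortion bound at \<open>(x, v)\<close>
  controls \<open>\<parallel>F x - v\<parallel>\<^sup>2 - \<parallel>x - v\<parallel>\<^sup>2 = \<parallel>w\<parallel>\<^sup>2 + 2 w \<bullet> (x - v)\<close> by \<open>3\<xi>L\<^sup>2\<close>, so comparing two
  vertices bounds \<open>w \<bullet> (v - v\<^sub>0)\<close> by \<open>3\<xi>L\<^sup>2\<close> along every edge from a fixed vertex \<open>v\<^sub>0\<close>.
  These \<open>m\<close> edges form a basis, and the coefficient of \<open>w\<close> at the edge towards \<open>u\<close> is at most
  \<open>\<parallel>w\<parallel>/a\<close>, because dividing by it exhibits a point of the facet opposite \<open>u\<close> at distance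
  \<open>\<parallel>w\<parallel>/|c\<^sub>u|\<close> from \<open>u\<close>. Expanding \<open>\<parallel>w\<parallel>\<^sup>2 = w \<bullet> w\<close> in this basis gives
  \<open>\<parallel>w\<parallel>\<^sup>2 \<le> m (\<parallel>w\<parallel>/a) 3\<xi>L\<^sup>2\<close>, i.e. \<open>\<parallel>w\<parallel> \<le> 3\<xi>L/t\<close>.\<close>

lemma distortion_map_nonneg:
  assumes "distortion_map \<xi> S F" "x \<in> S" "y \<in> S" "x \<noteq> y"
  shows "\<xi> \<ge> 0"
proof -
  have "\<bar>norm (F x - F y) - norm (x - y)\<bar> \<le> \<xi> * norm (x - y)"
    using assms(1-3) unfolding distortion_map_def by blast
  hence "\<xi> * norm (x - y) \<ge> 0" by (meson abs_ge_zero order_trans)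
  with \<open>x \<noteq> y\<close> show ?thesis by (simp add: zero_le_mult_iff)
qed

lemma dist_le_simplex_longest_edge:
  assumes "finite V" "u \<in> V" "v \<in> V"
  shows "dist u v \<le> simplex_longest_edge V"
proof -
  have "{dist u v | u v. u \<in> V \<and> v \<in> V} = (\<lambda>(u, v). dist u v) ` (V \<times> V)" by auto
  with assms show ?thesis
    unfolding simplex_longest_edge_def by (intro Max_ge) auto
qed

lemma simplex_longest_edge_pos:
  assumes "finite V" "u \<in> V" "v \<in> V" "u \<noteq> v"
  shows "simplex_longest_edge V > 0"
  using dist_le_simplex_longest_edge[OF assms(1-3)] assms(4) zero_less_dist_iff[of u v] by linarith

lemma norm_diff_vertex_le_simplex_longest_edge:
  assumes "finite V" "x \<in> convex hull V" "v \<in> V"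
  shows "norm (x - v) \<le> simplex_longest_edge V"
proof -
  have "\<forall>y\<in>convex hull V. dist v y \<le> simplex_longest_edge V"
    by (rule convex_on_convex_hull_bound)
      (auto intro: dist_le_simplex_longest_edge[OF assms(1,3)])
  with assms(2) show ?thesis by (metis dist_norm dist_commute)
qed

lemma simplex_min_altitude_le:
  assumes "finite V" "v \<in> V"
  shows "simplex_min_altitude V \<le> infdist v (affine hull (V - {v}))"
  unfolding simplex_min_altitude_def using assms by (intro Min_le) auto

lemma simplex_min_altitude_pos:
  fixes V :: "'a::euclidean_space set"
  assumes "\<not> affine_dependent V" "finite V" "card V \<ge> 2"
  shows "simplex_min_altitude V > 0"
proof -
  have "infdist v (affine hull (V - {v})) > 0" if "v \<in> V" for v
  proof (rule infdist_pos_not_in_closed)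
    show "v \<notin> affine hull (V - {v})"
      using assms(1) that unfolding affine_dependent_def by blast
    have "card (V - {v}) \<ge> 1" using assms(2,3) that by simp
    thus "affine hull (V - {v}) \<noteq> {}" by (metis affine_hull_eq_empty card.empty not_one_le_zero)
  qed simp
  moreover have "V \<noteq> {}" using assms(3) by auto
  ultimately show ?thesis
    unfolding simplex_min_altitude_def using assms(2) by (subst Min_gr_iff) auto
qed

lemma abs_coeff_mult_infdist_le_norm:
  fixes V :: "'a::real_normed_vector set"
  assumes "finite V" "v\<^sub>0 \<in> V" "u \<in> V - {v\<^sub>0}"
  shows "\<bar>c u\<bar> * infdist u (affine hull (V - {u}))
           \<le> norm (\<Sum>v\<in>V - {v\<^sub>0}. c v *\<^sub>R (v - v\<^sub>0))"
proof (cases "c u = 0")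
  case False
  define w where "w = (\<Sum>v\<in>V - {v\<^sub>0}. c v *\<^sub>R (v - v\<^sub>0))"
  define r where "r = (\<Sum>v\<in>V - {v\<^sub>0} - {u}. c v *\<^sub>R (v - v\<^sub>0))"
  define p where "p = v\<^sub>0 - (1 / c u) *\<^sub>R r"
  have "w = c u *\<^sub>R (u - v\<^sub>0) + r"
    unfolding w_def r_def using assms by (simp add: sum.remove)
  hence "(1 / c u) *\<^sub>R w = (u - v\<^sub>0) + (1 / c u) *\<^sub>R r"
    using False by (simp add: scaleR_add_right)
  hence "u - p = (1 / c u) *\<^sub>R w" unfolding p_def by (simp add: algebra_simps)
  hence "dist u p = norm w / \<bar>c u\<bar>" by (simp add: dist_norm)
  have "V - {u} = insert v\<^sub>0 (V - {v\<^sub>0} - {u})" using assms(2,3) by auto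
  hence "affine hull (V - {u}) = (\<lambda>y. v\<^sub>0 + y) ` span ((\<lambda>y. - v\<^sub>0 + y) ` (V - {v\<^sub>0} - {u}))"
    by (simp add: affine_hull_insert_span_gen)
  moreover have "- (1 / c u) *\<^sub>R r \<in> span ((\<lambda>y. - v\<^sub>0 + y) ` (V - {v\<^sub>0} - {u}))"
    unfolding r_def by (intro span_mul span_sum span_base) auto
  ultimately have "p \<in> affine hull (V - {u})" unfolding p_def by force
  hence "infdist u (affine hull (V - {u})) \<le> norm w / \<bar>c u\<bar>"
    using infdist_le \<open>dist u p = norm w / \<bar>c u\<bar>\<close> by metis
  thus ?thesis using False unfolding w_def by (simp add: field_simps)
qed simp

lemma span_edges_eq_UNIV:
  fixes V :: "'a::euclidean_space set"
  assumes "\<not> affine_dependent V" "card V = DIM('a) + 1" "v\<^sub>0 \<in> V"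
  shows "span ((\<lambda>v. v - v\<^sub>0) ` (V - {v\<^sub>0})) = UNIV"
proof -
  have fin: "finite V" using assms(2) card.infinite by fastforce
  have edges: "(\<lambda>v. v - v\<^sub>0) ` (V - {v\<^sub>0}) = (\<lambda>v. - v\<^sub>0 + v) ` (V - {v\<^sub>0})" by simp
  have "independent ((\<lambda>v. v - v\<^sub>0) ` (V - {v\<^sub>0}))"
    using assms(1,3) unfolding edges by (simp add: affine_dependent_iff_dependent2)
  moreover have "card ((\<lambda>v. v - v\<^sub>0) ` (V - {v\<^sub>0})) = dim (UNIV :: 'a set)"
    using assms fin by (subst card_image) (auto intro: inj_onI)
  ultimately show ?thesis
    using card_eq_dim[of _ UNIV] fin by (auto intro: span_UNIV dim_eq_full[THEN iffD1])
qed

lemma norm_mult_simplex_min_altitude_le: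
  fixes V :: "'a::euclidean_space set"
  assumes "\<not> affine_dependent V" "card V = DIM('a) + 1" "v\<^sub>0 \<in> V"
    and bound: "\<And>v. v \<in> V \<Longrightarrow> \<bar>w \<bullet> (v - v\<^sub>0)\<bar> \<le> M"
  shows "norm w * simplex_min_altitude V \<le> real (card V - 1) * M"
proof -
  define a where "a = simplex_min_altitude V"
  have fin: "finite V" using assms(2) card.infinite by fastforce
  have inj: "inj_on (\<lambda>v. v - v\<^sub>0) (V - {v\<^sub>0})" by (auto intro: inj_onI)
  have "w \<in> span ((\<lambda>v. v - v\<^sub>0) ` (V - {v\<^sub>0}))"
    using span_edges_eq_UNIV[OF assms(1-3)] by simp
  then obtain c where "w = (\<Sum>e\<in>(\<lambda>v. v - v\<^sub>0) ` (V - {v\<^sub>0}). c e *\<^sub>R e)"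
    using span_finite[of "(\<lambda>v. v - v\<^sub>0) ` (V - {v\<^sub>0})"] fin by auto
  hence w: "w = (\<Sum>v\<in>V - {v\<^sub>0}. c (v - v\<^sub>0) *\<^sub>R (v - v\<^sub>0))"
    using inj by (simp add: sum.reindex)
  have coeff: "\<bar>c (u - v\<^sub>0)\<bar> * a \<le> norm w" if "u \<in> V - {v\<^sub>0}" for u
    using abs_coeff_mult_infdist_le_norm[OF fin assms(3) that, of "\<lambda>v. c (v - v\<^sub>0)"]
      simplex_min_altitude_le[OF fin, of u] that
    unfolding a_def w[symmetric]
    by (meson DiffD1 abs_ge_zero mult_left_mono order_trans)
  have "norm w ^ 2 * a = (\<Sum>v\<in>V - {v\<^sub>0}. c (v - v\<^sub>0) * a * (w \<bullet> (v - v\<^sub>0)))"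
    unfolding power2_norm_eq_inner
    by (subst (2) w) (simp add: inner_sum_right sum_distrib_left algebra_simps)
  also have "\<dots> \<le> (\<Sum>v\<in>V - {v\<^sub>0}. norm w * M)"
  proof (rule sum_mono)
    fix v assume v: "v \<in> V - {v\<^sub>0}"
    have "c (v - v\<^sub>0) * a * (w \<bullet> (v - v\<^sub>0)) \<le> \<bar>c (v - v\<^sub>0) * a\<bar> * \<bar>w \<bullet> (v - v\<^sub>0)\<bar>"
      by (simp add: abs_mult[symmetric])
    also have "\<dots> \<le> norm w * M"
      using coeff[OF v] bound[of v] v simplex_min_altitude_pos[OF assms(1) fin] assms(2)
      by (intro mult_mono) (auto simp: a_def abs_mult)
    finally show "c (v - v\<^sub>0) * a * (w \<bullet> (v - v\<^sub>0)) \<le> norm w * M" .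
  qed
  also have "\<dots> = norm w * (real (card V - 1) * M)"
    using fin assms(3) by simp
  finally have "norm w * (norm w * a) \<le> norm w * (real (card V - 1) * M)"
    by (simp add: power2_eq_square mult.assoc)
  moreover have "M \<ge> 0" using bound[OF assms(3)] by simp
  ultimately show ?thesis
    unfolding a_def by (cases "w = 0") (auto simp: mult_le_cancel_left_pos)
qed

lemma abs_square_diff_le:
  fixes A B L \<xi> :: real
  assumes "0 \<le> A" "A \<le> L" "0 \<le> \<xi>" "\<xi> \<le> 1" "\<bar>B - A\<bar> \<le> \<xi> * A"
  shows "\<bar>B\<^sup>2 - A\<^sup>2\<bar> \<le> 3 * \<xi> * L\<^sup>2"
proof -
  have "\<xi> * A \<le> A" using mult_right_mono[OF assms(4,1)] by simp
  hence "\<bar>B + A\<bar> \<le> 3 * A" using assms(1,5) by linarith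
  have "\<bar>B\<^sup>2 - A\<^sup>2\<bar> = \<bar>B - A\<bar> * \<bar>B + A\<bar>"
    by (simp add: power2_eq_square abs_mult[symmetric] algebra_simps)
  also have "\<dots> \<le> (\<xi> * A) * (3 * A)"
    using assms \<open>\<bar>B + A\<bar> \<le> 3 * A\<close> by (intro mult_mono) auto
  also have "\<dots> = 3 * \<xi> * A\<^sup>2" by (simp add: power2_eq_square)
  also have "\<dots> \<le> 3 * \<xi> * L\<^sup>2" using assms(1-3) by (intro mult_left_mono power_mono) auto
  finally show ?thesis .
qed

lemma abs_inner_diff_le:
  fixes x y v v\<^sub>0 :: "'a::real_inner"
  assumes "0 \<le> \<xi>" "\<xi> \<le> 1"
    and "\<bar>norm (y - v) - norm (x - v)\<bar> \<le> \<xi> * norm (x - v)" "norm (x - v) \<le> L"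
    and "\<bar>norm (y - v\<^sub>0) - norm (x - v\<^sub>0)\<bar> \<le> \<xi> * norm (x - v\<^sub>0)" "norm (x - v\<^sub>0) \<le> L"
  shows "\<bar>(y - x) \<bullet> (v - v\<^sub>0)\<bar> \<le> 3 * \<xi> * L\<^sup>2"
proof -
  have polar: "(norm (y - p))\<^sup>2 - (norm (x - p))\<^sup>2 = (norm (y - x))\<^sup>2 + 2 * ((y - x) \<bullet> (x - p))"
    for p :: 'a
    using dot_norm[of "y - x" "x - p"] by simp
  have "2 * ((y - x) \<bullet> (v - v\<^sub>0))
      = ((norm (y - v\<^sub>0))\<^sup>2 - (norm (x - v\<^sub>0))\<^sup>2) - ((norm (y - v))\<^sup>2 - (norm (x - v))\<^sup>2)"
    unfolding polar by (simp add: algebra_simps)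
  moreover have "\<bar>(norm (y - v))\<^sup>2 - (norm (x - v))\<^sup>2\<bar> \<le> 3 * \<xi> * L\<^sup>2"
    using abs_square_diff_le[OF norm_ge_zero assms(4,1,2,3)] .
  moreover have "\<bar>(norm (y - v\<^sub>0))\<^sup>2 - (norm (x - v\<^sub>0))\<^sup>2\<bar> \<le> 3 * \<xi> * L\<^sup>2"
    using abs_square_diff_le[OF norm_ge_zero assms(6,1,2,5)] .
  ultimately show ?thesis by linarith
qed

theorem mainTheorem4:
  fixes V :: "'a::euclidean_space set" and F :: "'a \<Rightarrow> 'a" and \<xi> :: real and x :: 'a
  assumes "\<not> affine_dependent V"
    and "card V = DIM('a) + 1"
    and "distortion_map \<xi> (convex hull V) F"
    and "\<forall>v\<in>V. F v = v"
    and "\<xi> \<le> 1"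
    and "x \<in> convex hull V"
  shows "norm (x - F x) \<le> 3 * \<xi> * simplex_longest_edge V / simplex_thickness V"
proof -
  define L where "L = simplex_longest_edge V"
  define a where "a = simplex_min_altitude V"
  have fin: "finite V" using assms(2) card.infinite by fastforce
  obtain v\<^sub>0 where "v\<^sub>0 \<in> V" using assms(2) by fastforce
  moreover have "card (V - {v\<^sub>0}) = DIM('a)" using assms(2) fin \<open>v\<^sub>0 \<in> V\<close> by simp
  then obtain u where "u \<in> V - {v\<^sub>0}" by (metis DIM_positive all_not_in_conv card.empty less_irrefl)
  ultimately have vertices: "v\<^sub>0 \<in> V" "u \<in> V" "u \<noteq> v\<^sub>0" by auto
  have "L > 0" unfolding L_def using simplex_longest_edge_pos[OF fin vertices(2,1,3)] .
  have "a > 0" unfolding a_def using simplex_min_altitude_pos[OF assms(1) fin] assms(2) by simp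
  have "\<xi> \<ge> 0" using distortion_map_nonneg[OF assms(3)] vertices by (meson hull_inc)
  have displacement: "\<bar>norm (F x - v) - norm (x - v)\<bar> \<le> \<xi> * norm (x - v)" if "v \<in> V" for v
    using assms(3,4,6) that hull_inc[OF that] unfolding distortion_map_def by fastforce
  have "\<bar>(F x - x) \<bullet> (v - v\<^sub>0)\<bar> \<le> 3 * \<xi> * L\<^sup>2" if "v \<in> V" for v
    using abs_inner_diff_le[OF \<open>\<xi> \<ge> 0\<close> assms(5) displacement[OF that] _
        displacement[OF vertices(1)]]
      norm_diff_vertex_le_simplex_longest_edge[OF fin assms(6)] that vertices(1)
    unfolding L_def by blast
  hence "norm (F x - x) * a \<le> real (card V - 1) * (3 * \<xi> * L\<^sup>2)"
    unfolding a_def by (rule norm_mult_simplex_min_altitude_le[OF assms(1,2) vertices(1)])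
  hence "norm (x - F x) \<le> real (card V - 1) * (3 * \<xi> * L\<^sup>2) / a"
    using \<open>a > 0\<close> by (simp add: norm_minus_commute pos_le_divide_eq)
  also have "\<dots> = 3 * \<xi> * L / (a / (real (card V - 1) * L))"
    using \<open>L > 0\<close> assms(2) by (simp add: field_simps power2_eq_square)
  finally show ?thesis unfolding L_def a_def simplex_thickness_def .
qed

end
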